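(* Let $a>0$, $b,c\ge 0$, and consider the system $$\dot x=x(1-y+cx-axz),\qquad \dot y=y(-1+x),\qquad \dot z=z(-b+ax^2).$$ Let $f$ be an irreducible Darboux polynomial of degree greater than one with non-zero cofactor $$K=\alpha_0+\alpha_1x+\alpha_2y+\alpha_3z+\alpha_4x^2+\alpha_5xy+\alpha_6xz+\alpha_7y^2+\alpha_8yz+\alpha_9z^2,\quad \alpha_i\in\mathbb{C}.$$ Then $\alpha_5=\alpha_7=\alpha_8=\alpha_9=0$, and $\alpha_4=N_4a$, $\alpha_6=-N_6a$ for some $N_4,N_6\in\mathbb{N}\cup\{0\}$.
   Context: A Darboux polynomial is $f\in\mathbb{C}[x,y,z]$ with $x(1-y+cx-axz)f_x+y(-1+x)f_y+z(-b+ax^2)f_z=Kf$ for a polynomial cofactor $K$ of degree at most two. *)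

theory Defs
  imports "HOL-Computational_Algebra.Polynomial_Factorial"
begin

text \<open>Polynomials in C[x,y,z] are represented as complex poly poly poly:
  outermost variable z, middle variable y, innermost variable x.\<close>

type_synonym cpoly3 = "complex poly poly poly"

definition cX :: cpoly3 where "cX = [:[:[:0, 1:]:]:]"
definition cY :: cpoly3 where "cY = [:[:0, 1:]:]"
definition cZ :: cpoly3 where "cZ = [:0, 1:]"
definition cC :: "complex \<Rightarrow> cpoly3" where "cC r = [:[:[:r:]:]:]"

definition dX :: "cpoly3 \<Rightarrow> cpoly3" where "dX f = map_poly (map_poly pderiv) f"
definition dY :: "cpoly3 \<Rightarrow> cpoly3" where "dY f = map_poly pderiv f"
definition dZ :: "cpoly3 \<Rightarrow> cpoly3" where "dZ f = pderiv f"

definition mcoeff :: "cpoly3 \<Rightarrow> nat \<Rightarrow> nat \<Rightarrow> nat \<Rightarrow> complex" where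
  "mcoeff f i j k = coeff (coeff (coeff f k) j) i"

definition total_degree :: "cpoly3 \<Rightarrow> nat" where
  "total_degree f = (if f = 0 then 0
     else Max {i + j + k | i j k. mcoeff f i j k \<noteq> 0})"

definition darboux_eq :: "real \<Rightarrow> real \<Rightarrow> real \<Rightarrow> cpoly3 \<Rightarrow> cpoly3 \<Rightarrow> bool" where
  "darboux_eq a b c f K \<longleftrightarrow>
     cX * (1 - cY + cC (of_real c) * cX - cC (of_real a) * cX * cZ) * dX f
     + cY * (-1 + cX) * dY f
     + cZ * (- cC (of_real b) + cC (of_real a) * cX ^ 2) * dZ f
     = K * f"

end

(*
  Let n be the total degree of f and f_n its homogeneous part of degree n.  The terms of
  degree n + 2 in the Darboux equation give  a x^2 z (d f_n/dz - d f_n/dx) = K_2 f_n,  where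
  K_2 is the quadratic part of K.  Read this identity at the coefficients next to the monomials
  of f_n that are lexicographically least for the variable orders (x, y, z), (x, z, y) and
  (z, x, y): all contributions but one vanish, which forces alpha9 = alpha7 = alpha8 = alpha5 = 0,
  alpha6 = - i a and alpha4 = k a, with i the least x-exponent and k the least z-exponent
  occurring in f_n.
*)
theory Submission
  imports Defs "HOL-Library.Product_Lexorder"
begin

text \<open>Coefficients indexed by integers and zero at negative exponents, so that multiplication
  by a variable becomes an unconditional index shift.\<close>

definition icoeff :: "cpoly3 \<Rightarrow> int \<Rightarrow> int \<Rightarrow> int \<Rightarrow> complex" where
  "icoeff f i j k =
     (if 0 \<le> i \<and> 0 \<le> j \<and> 0 \<le> k then mcoeff f (nat i) (nat j) (nat k) else 0)"

lemma icoeff_nonzero_imp_nonneg: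
  "icoeff f i j k \<noteq> 0 \<Longrightarrow> 0 \<le> i \<and> 0 \<le> j \<and> 0 \<le> k"
  by (simp add: icoeff_def split: if_splits)

lemma icoeff_add [simp]: "icoeff (g + h) i j k = icoeff g i j k + icoeff h i j k"
  by (simp add: icoeff_def mcoeff_def)

lemma icoeff_diff [simp]: "icoeff (g - h) i j k = icoeff g i j k - icoeff h i j k"
  by (simp add: icoeff_def mcoeff_def)

lemma icoeff_uminus [simp]: "icoeff (- g) i j k = - icoeff g i j k"
  by (simp add: icoeff_def mcoeff_def)

lemma icoeff_cC_mult [simp]: "icoeff (cC r * g) i j k = r * icoeff g i j k"
  by (simp add: icoeff_def mcoeff_def cC_def)

lemma icoeff_mult_cC [simp]: "icoeff (g * cC r) i j k = r * icoeff g i j k"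
  by (subst mult.commute) simp

lemma icoeff_cX_mult [simp]: "icoeff (cX * g) i j k = icoeff g (i - 1) j k"
proof (cases "i \<le> 0")
  case False
  then have "nat i = Suc (nat (i - 1))" by simp
  with False show ?thesis by (simp add: icoeff_def mcoeff_def cX_def)
qed (auto simp: icoeff_def mcoeff_def cX_def)

lemma icoeff_cY_mult [simp]: "icoeff (cY * g) i j k = icoeff g i (j - 1) k"
proof (cases "j \<le> 0")
  case False
  then have "nat j = Suc (nat (j - 1))" by simp
  with False show ?thesis by (simp add: icoeff_def mcoeff_def cY_def)
qed (auto simp: icoeff_def mcoeff_def cY_def)

lemma icoeff_cZ_mult [simp]: "icoeff (cZ * g) i j k = icoeff g i j (k - 1)"
proof (cases "k \<le> 0")
  case False
  then have "nat k = Suc (nat (k - 1))" by simp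
  with False show ?thesis by (simp add: icoeff_def mcoeff_def cZ_def)
qed (auto simp: icoeff_def mcoeff_def cZ_def)

lemma icoeff_dX [simp]: "icoeff (dX g) i j k = of_int (i + 1) * icoeff g (i + 1) j k"
  by (cases "i = -1") (auto simp: icoeff_def mcoeff_def dX_def coeff_map_poly coeff_pderiv nat_add_distrib)

lemma icoeff_dY [simp]: "icoeff (dY g) i j k = of_int (j + 1) * icoeff g i (j + 1) k"
  by (cases "j = -1") (auto simp: icoeff_def mcoeff_def dY_def coeff_map_poly coeff_pderiv of_nat_poly nat_add_distrib)

lemma icoeff_dZ [simp]: "icoeff (dZ g) i j k = of_int (k + 1) * icoeff g i j (k + 1)"
  by (cases "k = -1") (auto simp: icoeff_def mcoeff_def dZ_def coeff_pderiv of_nat_poly nat_add_distrib)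

lemma finite_mcoeff_support: "finite {(i, j, k). mcoeff f i j k \<noteq> 0}"
proof (rule finite_subset)
  show "{(i, j, k). mcoeff f i j k \<noteq> 0} \<subseteq>
    (\<Union>k\<le>degree f. \<Union>j\<le>degree (coeff f k). {..degree (coeff (coeff f k) j)} \<times> {j} \<times> {k})"
    by (force simp: mcoeff_def intro: le_degree)
qed auto

lemma
  assumes "f \<noteq> 0"
  shows mcoeff_le_total_degree: "mcoeff f i j k \<noteq> 0 \<Longrightarrow> i + j + k \<le> total_degree f"
    and total_degree_attained: "\<exists>i j k. mcoeff f i j k \<noteq> 0 \<and> i + j + k = total_degree f"
proof -
  let ?sums = "{i + j + k | i j k. mcoeff f i j k \<noteq> 0}"
  have "?sums = (\<lambda>(i, j, k). i + j + k) ` {(i, j, k). mcoeff f i j k \<noteq> 0}"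
    by (auto intro: image_eqI[where x = "(_, _, _)"])
  then have finite: "finite ?sums"
    using finite_mcoeff_support by simp
  have "mcoeff f (degree (lead_coeff (lead_coeff f))) (degree (lead_coeff f)) (degree f) \<noteq> 0"
    using assms by (simp add: mcoeff_def)
  then have "?sums \<noteq> {}"
    by blast
  with finite have "Max ?sums \<in> ?sums"
    by (rule Max_in)
  then show "\<exists>i j k. mcoeff f i j k \<noteq> 0 \<and> i + j + k = total_degree f"
    using assms by (fastforce simp: total_degree_def)
  show "mcoeff f i j k \<noteq> 0 \<Longrightarrow> i + j + k \<le> total_degree f"
    using assms finite by (auto simp: total_degree_def intro: Max_ge)
qed

lemma darboux_eq_icoeff:
  fixes a b c :: real and i j k :: int
  assumes "darboux_eq a b c f K"
    and "K = cC \<alpha>0 + cC \<alpha>1 * cX + cC \<alpha>2 * cY + cC \<alpha>3 * cZ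
           + cC \<alpha>4 * cX ^ 2 + cC \<alpha>5 * cX * cY + cC \<alpha>6 * cX * cZ
           + cC \<alpha>7 * cY ^ 2 + cC \<alpha>8 * cY * cZ + cC \<alpha>9 * cZ ^ 2"
  defines "g \<equiv> icoeff f"
  shows "of_int i * g i j k - of_int i * g i (j - 1) k + of_real c * of_int (i - 1) * g (i - 1) j k
      - of_real a * of_int (i - 1) * g (i - 1) j (k - 1) - of_int j * g i j k + of_int j * g (i - 1) j k
      - of_real b * of_int k * g i j k + of_real a * of_int k * g (i - 2) j k
    = \<alpha>0 * g i j k + \<alpha>1 * g (i - 1) j k + \<alpha>2 * g i (j - 1) k + \<alpha>3 * g i j (k - 1)
      + \<alpha>4 * g (i - 2) j k + \<alpha>5 * g (i - 1) (j - 1) k + \<alpha>6 * g (i - 1) j (k - 1)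
      + \<alpha>7 * g i (j - 2) k + \<alpha>8 * g i (j - 1) (k - 1) + \<alpha>9 * g i j (k - 2)"
proof -
  have "icoeff (cX * (1 - cY + cC (of_real c) * cX - cC (of_real a) * cX * cZ) * dX f
      + cY * (-1 + cX) * dY f + cZ * (- cC (of_real b) + cC (of_real a) * cX ^ 2) * dZ f) i j k
    = icoeff (K * f) i j k"
    using assms(1) unfolding darboux_eq_def by simp
  then show ?thesis
    unfolding assms(2) g_def by (simp add: algebra_simps power2_eq_square)
qed

lemma icoeff_eq_0_above_total_degree:
  "int (total_degree f) < i + j + k \<Longrightarrow> icoeff f i j k = 0"
proof (rule ccontr)
  assume above: "int (total_degree f) < i + j + k" and nonzero: "icoeff f i j k \<noteq> 0"
  then have "0 \<le> i" "0 \<le> j" "0 \<le> k"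
    using icoeff_nonzero_imp_nonneg by blast+
  moreover from nonzero have "f \<noteq> 0" and "mcoeff f (nat i) (nat j) (nat k) \<noteq> 0"
    by (auto simp: icoeff_def mcoeff_def split: if_splits)
  then have "nat i + nat j + nat k \<le> total_degree f"
    by (rule mcoeff_le_total_degree)
  ultimately show False
    using above by linarith
qed

lemma darboux_eq_top_icoeff:
  fixes a b c :: real and i j k :: int
  assumes "darboux_eq a b c f K"
    and "K = cC \<alpha>0 + cC \<alpha>1 * cX + cC \<alpha>2 * cY + cC \<alpha>3 * cZ
           + cC \<alpha>4 * cX ^ 2 + cC \<alpha>5 * cX * cY + cC \<alpha>6 * cX * cZ
           + cC \<alpha>7 * cY ^ 2 + cC \<alpha>8 * cY * cZ + cC \<alpha>9 * cZ ^ 2"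
    and "i + j + k = int (total_degree f) + 2"
  defines "g \<equiv> icoeff f"
  shows "of_real a * of_int k * g (i - 2) j k - of_real a * of_int (i - 1) * g (i - 1) j (k - 1)
    = \<alpha>4 * g (i - 2) j k + \<alpha>5 * g (i - 1) (j - 1) k + \<alpha>6 * g (i - 1) j (k - 1)
      + \<alpha>7 * g i (j - 2) k + \<alpha>8 * g i (j - 1) (k - 1) + \<alpha>9 * g i j (k - 2)"
proof -
  have "g i j k = 0" "g (i - 1) j k = 0" "g i (j - 1) k = 0" "g i j (k - 1) = 0"
    using assms(3) unfolding g_def by (simp_all add: icoeff_eq_0_above_total_degree)
  with darboux_eq_icoeff[OF assms(1,2), of i j k] show ?thesis
    unfolding g_def by simp
qed

lemma lex_least_nonzero_on_plane:
  fixes g :: "int \<Rightarrow> int \<Rightarrow> int \<Rightarrow> 'a::zero"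
  assumes nonneg: "\<forall>i j k. g i j k \<noteq> 0 \<longrightarrow> 0 \<le> i \<and> 0 \<le> j \<and> 0 \<le> k"
    and "g i j k \<noteq> 0" "i + j + k = n"
  obtains i0 j0 k0 where "g i0 j0 k0 \<noteq> 0" "i0 + j0 + k0 = n"
    "\<And>i j k. i + j + k = n \<Longrightarrow> (i, j, k) < (i0, j0, k0) \<Longrightarrow> g i j k = 0"
proof -
  let ?S = "{(i, j, k). i + j + k = n \<and> g i j k \<noteq> 0}"
  have "?S \<subseteq> {0..n} \<times> {0..n} \<times> {0..n}"
  proof
    fix p assume "p \<in> ?S"
    then obtain i j k where "p = (i, j, k)" "i + j + k = n" "g i j k \<noteq> 0"
      by auto
    with nonneg show "p \<in> {0..n} \<times> {0..n} \<times> {0..n}"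
      by auto
  qed
  then have "finite ?S"
    by (rule finite_subset) simp
  moreover have "?S \<noteq> {}"
    using assms(2,3) by blast
  ultimately have "\<exists>m\<in>?S. \<not> (\<exists>q\<in>?S. q < m)"
    by (rule ex_min_if_finite)
  then obtain m where "m \<in> ?S" and least: "\<not> (\<exists>q\<in>?S. q < m)"
    by blast
  obtain i0 j0 k0 where "m = (i0, j0, k0)"
    by (cases m)
  show thesis
  proof (rule that)
    show "g i0 j0 k0 \<noteq> 0" "i0 + j0 + k0 = n"
      using \<open>m \<in> ?S\<close> \<open>m = (i0, j0, k0)\<close> by simp_all
    show "g i j k = 0" if "i + j + k = n" "(i, j, k) < (i0, j0, k0)" for i j k
      using least that \<open>m = (i0, j0, k0)\<close> by blast
  qed
qed

lemma cofactor_shape_from_top_relation: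
  fixes g :: "int \<Rightarrow> int \<Rightarrow> int \<Rightarrow> complex" and a :: complex
  assumes nonneg: "\<And>i j k. g i j k \<noteq> 0 \<Longrightarrow> 0 \<le> i \<and> 0 \<le> j \<and> 0 \<le> k"
    and top: "g i j k \<noteq> 0" "i + j + k = n"
    and rel: "\<And>i j k. i + j + k = n + 2 \<Longrightarrow>
      a * of_int k * g (i - 2) j k - a * of_int (i - 1) * g (i - 1) j (k - 1)
      = \<alpha>4 * g (i - 2) j k + \<alpha>5 * g (i - 1) (j - 1) k + \<alpha>6 * g (i - 1) j (k - 1)
        + \<alpha>7 * g i (j - 2) k + \<alpha>8 * g i (j - 1) (k - 1) + \<alpha>9 * g i j (k - 2)"
  shows "\<alpha>5 = 0 \<and> \<alpha>7 = 0 \<and> \<alpha>8 = 0 \<and> \<alpha>9 = 0 \<and>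
         (\<exists>N4 N6 :: nat. \<alpha>4 = of_nat N4 * a \<and> \<alpha>6 = - (of_nat N6 * a))"
proof -
  have nonneg_ijk: "\<forall>i j k. g i j k \<noteq> 0 \<longrightarrow> 0 \<le> i \<and> 0 \<le> j \<and> 0 \<le> k"
    and nonneg_ikj: "\<forall>i k j. g i j k \<noteq> 0 \<longrightarrow> 0 \<le> i \<and> 0 \<le> k \<and> 0 \<le> j"
    and nonneg_kij: "\<forall>k i j. g i j k \<noteq> 0 \<longrightarrow> 0 \<le> k \<and> 0 \<le> i \<and> 0 \<le> j"
    using nonneg by blast+
  have sum_ikj: "i + k + j = n" and sum_kij: "k + i + j = n"
    using top(2) by linarith+
  obtain i0 j1 k1 where ijk1: "g i0 j1 k1 \<noteq> 0" "i0 + j1 + k1 = n"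
    and least_ijk: "\<And>i j k. i + j + k = n \<Longrightarrow> (i, j, k) < (i0, j1, k1) \<Longrightarrow> g i j k = 0"
    by (rule lex_least_nonzero_on_plane[OF nonneg_ijk top]) (rule that)
  obtain i2 k2 j2 where ijk2: "g i2 j2 k2 \<noteq> 0" "i2 + k2 + j2 = n"
    and least_ikj: "\<And>i k j. i + k + j = n \<Longrightarrow> (i, k, j) < (i2, k2, j2) \<Longrightarrow> g i j k = 0"
    by (rule lex_least_nonzero_on_plane[of "\<lambda>i k j. g i j k", OF nonneg_ikj top(1) sum_ikj]) (rule that)
  obtain k3 i3 j3 where ijk3: "g i3 j3 k3 \<noteq> 0" "k3 + i3 + j3 = n"
    and least_kij: "\<And>k i j. k + i + j = n \<Longrightarrow> (k, i, j) < (k3, i3, j3) \<Longrightarrow> g i j k = 0"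
    by (rule lex_least_nonzero_on_plane[of "\<lambda>k i j. g i j k", OF nonneg_kij top(1) sum_kij]) (rule that)
  have "\<not> i2 < i0"
    using least_ijk[of i2 j2 k2] ijk2 by auto
  moreover have "\<not> i0 < i2"
    using least_ikj[of i0 k1 j1] ijk1 by auto
  ultimately have "i2 = i0"
    by linarith
  note vanish = least_ijk least_ikj[unfolded \<open>i2 = i0\<close>] least_kij
  note ijk2 = ijk2[unfolded \<open>i2 = i0\<close>]
  have \<alpha>9: "\<alpha>9 = 0"
    using rel[of i0 j1 "k1 + 2"] ijk1 by (simp add: vanish)
  have \<alpha>7: "\<alpha>7 = 0"
    using rel[of i0 "j2 + 2" k2] ijk2 by (simp add: vanish)
  have \<alpha>8: "\<alpha>8 = 0"
    using rel[of i0 "j2 + 1" "k2 + 1"] ijk2 by (simp add: vanish \<alpha>7)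
  have \<alpha>5: "\<alpha>5 = 0"
    using rel[of "i0 + 1" "j2 + 1" k2] ijk2 by (simp add: vanish \<alpha>7 \<alpha>8 \<alpha>9)
  have "\<alpha>6 * g i0 j1 k1 = - (of_int i0 * a) * g i0 j1 k1"
    using rel[of "i0 + 1" j1 "k1 + 1"] ijk1 by (simp add: vanish \<alpha>5 \<alpha>7 \<alpha>8 \<alpha>9 mult_ac)
  with ijk1(1) have "\<alpha>6 = - (of_int i0 * a)"
    by (metis mult_right_cancel)
  moreover have "\<alpha>4 = of_int k3 * a"
    using rel[of "i3 + 2" j3 k3] ijk3 by (simp add: vanish \<alpha>5 \<alpha>7 \<alpha>8 \<alpha>9 mult.commute)
  moreover have "0 \<le> i0" "0 \<le> k3"
    using nonneg ijk1(1) ijk3(1) by blast+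
  ultimately have "\<alpha>4 = of_nat (nat k3) * a \<and> \<alpha>6 = - (of_nat (nat i0) * a)"
    by simp
  with \<alpha>5 \<alpha>7 \<alpha>8 \<alpha>9 show ?thesis
    by blast
qed

theorem lemma4p2:
  fixes a b c :: real
    and \<alpha>0 \<alpha>1 \<alpha>2 \<alpha>3 \<alpha>4 \<alpha>5 \<alpha>6 \<alpha>7 \<alpha>8 \<alpha>9 :: complex
    and f K :: cpoly3
  assumes "a > 0" and "b \<ge> 0" and "c \<ge> 0"
    and "irreducible f"
    and "total_degree f > 1"
    and "K = cC \<alpha>0 + cC \<alpha>1 * cX + cC \<alpha>2 * cY + cC \<alpha>3 * cZ
           + cC \<alpha>4 * cX ^ 2 + cC \<alpha>5 * cX * cY + cC \<alpha>6 * cX * cZ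
           + cC \<alpha>7 * cY ^ 2 + cC \<alpha>8 * cY * cZ + cC \<alpha>9 * cZ ^ 2"
    and "K \<noteq> 0"
    and "darboux_eq a b c f K"
  shows "\<alpha>5 = 0 \<and> \<alpha>7 = 0 \<and> \<alpha>8 = 0 \<and> \<alpha>9 = 0 \<and>
         (\<exists>N4 N6 :: nat. \<alpha>4 = of_nat N4 * complex_of_real a \<and>
                         \<alpha>6 = - (of_nat N6 * complex_of_real a))"
proof -
  have "f \<noteq> 0"
    using \<open>irreducible f\<close> by auto
  then obtain i j k where "mcoeff f i j k \<noteq> 0" and "i + j + k = total_degree f"
    using total_degree_attained by blast
  then have top: "icoeff f (int i) (int j) (int k) \<noteq> 0"
    "int i + int j + int k = int (total_degree f)"
    by (simp_all add: icoeff_def)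
  show ?thesis
    by (rule cofactor_shape_from_top_relation[where g = "icoeff f" and n = "int (total_degree f)",
          OF icoeff_nonzero_imp_nonneg top darboux_eq_top_icoeff[OF assms(8,6)]])
qed

end
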